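(* For any $k$ and $d$, there exists $m=O(k^2\log k)$ such that for any $d$-dimensional $k$-Fourier-sparse signal $x(t)$, any $t_0\in\mathbb{R}^d_{\ge0}$ and any $\tau\in\mathbb{R}^d_{>0}$, there exist $C_1,\dots,C_m\in\mathbb{C}$ such that $|C_j|\le 11$ for all $j\in[m]$ and $$x(t_0)=\sum_{j\in[m]}C_j\,x(t_0+j\tau).$$
   Context: A $d$-dimensional $k$-Fourier-sparse signal is a function $x:\mathbb{R}^d\to\mathbb{C}$ of the form $x(t)=\sum_{i=1}^k v_ie^{2\pi i\langle f_i,t\rangle}$ with $v_i\in\mathbb{C}$, $f_i\in\mathbb{R}^d$. *)

theory Defs
  imports Complex_Main
begin

text \<open>Vectors in R^d are represented as functions nat => real; only the
  coordinates l < d matter.  Inner product on R^d:\<close>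
definition inner_d :: "nat \<Rightarrow> (nat \<Rightarrow> real) \<Rightarrow> (nat \<Rightarrow> real) \<Rightarrow> real" where
  "inner_d d a b = (\<Sum>l<d. a l * b l)"

definition sparse_signal ::
  "nat \<Rightarrow> nat \<Rightarrow> (nat \<Rightarrow> complex) \<Rightarrow> (nat \<Rightarrow> nat \<Rightarrow> real) \<Rightarrow> (nat \<Rightarrow> real) \<Rightarrow> complex" where
  "sparse_signal d k v f t = (\<Sum>i<k. v i * exp (2 * pi * \<i> * complex_of_real (inner_d d (f i) t)))"

end

theory Submission
  imports Defs "HOL-Computational_Algebra.Polynomial" "HOL-Library.FuncSet"
begin

text \<open>Shifting the argument by j\<tau> turns the signal into an exponential sum
  Y(j) = sum_i w_i z_i^j with |z_i| = 1.  If a polynomial p of degree at most m vanishes at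
  all z_i and |p_j| \<le> |p_0| for all j, then sum_j p_j Y(j) = 0 expresses Y(0) through
  Y(1), ..., Y(m) with coefficients of modulus at most 1.  Reflecting, it suffices to find q
  vanishing at the u_i = 1/z_i, with unimodular leading coefficient and all coefficients in
  the unit disc.  Among the 2^N polynomials sum_{j in S} X^j with S \<subseteq> [k, k + N),
  pigeonhole yields two whose remainders modulo prod_i (X - u_i) have coefficients within
  distance 1: expanding in the Newton basis shows that these coefficients are bounded
  polynomially in N, so there are only 2^O(k^2 log N) cells, and N = O(k^2 log k) suffices.
  The difference of the two polynomials, corrected by the difference of their remainders,
  is q.\<close>

definition newton_basis :: "(nat \<Rightarrow> 'a::comm_ring_1) \<Rightarrow> nat \<Rightarrow> 'a poly" where
  "newton_basis u l = (\<Prod>i<l. [:- u i, 1:])"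

text \<open>The complete homogeneous symmetric polynomial of degree j - l in u_0, ..., u_l.\<close>

fun newton_coeff :: "(nat \<Rightarrow> 'a::comm_semiring_1) \<Rightarrow> nat \<Rightarrow> nat \<Rightarrow> 'a" where
  "newton_coeff u 0 0 = 1"
| "newton_coeff u (Suc l) 0 = 0"
| "newton_coeff u 0 (Suc j) = u 0 * newton_coeff u 0 j"
| "newton_coeff u (Suc l) (Suc j) = newton_coeff u l j + u (Suc l) * newton_coeff u (Suc l) j"

lemma poly_newton_basis: "poly (newton_basis u l) z = (\<Prod>i<l. z - u i)"
  by (simp add: newton_basis_def poly_prod)

lemma newton_basis_Suc: "newton_basis u (Suc l) = pCons 0 (newton_basis u l) - smult (u l) (newton_basis u l)"
  by (simp add: newton_basis_def mult.commute[of _ "[:_, 1:]"])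

lemma norm_coeff_newton_basis_le:
  fixes u :: "nat \<Rightarrow> 'a::real_normed_field"
  assumes "\<And>i. i < l \<Longrightarrow> norm (u i) \<le> 1"
  shows "norm (coeff (newton_basis u l) a) \<le> real (l choose a)"
  using assms
proof (induction l arbitrary: a)
  case 0
  then show ?case by (simp add: newton_basis_def)
next
  case (Suc l)
  let ?p = "newton_basis u l"
  have IH: "norm (coeff ?p b) \<le> real (l choose b)" for b
    using Suc by simp
  have "norm (coeff (newton_basis u (Suc l)) a)
      \<le> norm (coeff (pCons 0 ?p) a) + norm (u l) * norm (coeff ?p a)"
    by (metis newton_basis_Suc coeff_diff coeff_smult norm_mult norm_triangle_ineq4)
  also have "\<dots> \<le> norm (coeff (pCons 0 ?p) a) + 1 * real (l choose a)"
    using Suc.prems[of l] IH[of a] by (intro add_left_mono mult_mono) auto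
  also have "\<dots> \<le> real (Suc l choose a)"
    using IH by (cases a) auto
  finally show ?case .
qed

lemma newton_coeff_eq_0: "j < l \<Longrightarrow> newton_coeff u l j = 0"
proof (induction j arbitrary: l)
  case 0 then show ?case by (cases l) auto
next
  case (Suc j) then show ?case by (cases l) auto
qed

lemma norm_newton_coeff_le:
  fixes u :: "nat \<Rightarrow> 'a::real_normed_field"
  assumes "\<And>i. norm (u i) \<le> 1"
  shows "norm (newton_coeff u l j) \<le> real (j choose l)"
proof (induction j arbitrary: l)
  case 0 then show ?case by (cases l) auto
next
  case (Suc j)
  show ?case
  proof (cases l)
    case 0
    then show ?thesis
      using assms[of 0] Suc[of 0] by (simp add: norm_mult mult_le_one)
  next
    case (Suc l')
    have "norm (newton_coeff u (Suc l') (Suc j))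
        \<le> norm (newton_coeff u l' j) + norm (u (Suc l')) * norm (newton_coeff u (Suc l') j)"
      by (metis newton_coeff.simps(4) norm_mult norm_triangle_ineq)
    also have "\<dots> \<le> real (j choose l') + 1 * real (j choose Suc l')"
      using Suc.IH[of l'] Suc.IH[of "Suc l'"] assms[of "Suc l'"]
      by (intro add_mono mult_mono) auto
    finally show ?thesis using Suc by simp
  qed
qed

lemma power_eq_sum_newton_basis:
  "z ^ j = (\<Sum>l\<le>j. newton_coeff u l j * poly (newton_basis u l) z)"
proof (induction j)
  case 0 then show ?case by (simp add: newton_basis_def)
next
  case (Suc j)
  let ?g = "newton_coeff u" and ?N = "\<lambda>l. poly (newton_basis u l) z"
  have shift: "z * ?N l = ?N (Suc l) + u l * ?N l" for l
    by (simp add: newton_basis_Suc algebra_simps)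
  have top: "(\<Sum>l\<le>j. u l * ?g l j * ?N l) = (\<Sum>l\<le>Suc j. u l * ?g l j * ?N l)"
    by (simp add: newton_coeff_eq_0)
  have "z ^ Suc j = (\<Sum>l\<le>j. ?g l j * (z * ?N l))"
    using Suc by (simp add: sum_distrib_left mult_ac)
  also have "\<dots> = (\<Sum>l\<le>j. ?g l j * ?N (Suc l)) + (\<Sum>l\<le>j. u l * ?g l j * ?N l)"
    by (simp add: shift distrib_left sum.distrib mult_ac)
  also have "\<dots> = (\<Sum>l\<le>Suc j. ?g l (Suc j) * ?N l)"
    unfolding top sum.atMost_Suc_shift by (simp add: sum.distrib algebra_simps)
  finally show ?case .
qed

lemma degree_newton_basis_le: "degree (newton_basis u l) \<le> l"
  unfolding newton_basis_def
  by (rule order.trans[OF degree_prod_sum_le]) (auto intro: order.trans[OF sum_mono[of _ _ "\<lambda>_. 1"]])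

text \<open>The remainder of X^j modulo newton_basis u k.\<close>

definition power_remainder :: "(nat \<Rightarrow> 'a::comm_ring_1) \<Rightarrow> nat \<Rightarrow> nat \<Rightarrow> 'a poly" where
  "power_remainder u k j = (\<Sum>l<k. smult (newton_coeff u l j) (newton_basis u l))"

lemma poly_power_remainder:
  assumes "i < k"
  shows "poly (power_remainder u k j) (u i) = u i ^ j"
proof -
  have vanish: "poly (newton_basis u l) (u i) = 0" if "i < l" for l
    unfolding poly_newton_basis using that by (intro prod_zero) auto
  have "u i ^ j = (\<Sum>l<j+k+1. newton_coeff u l j * poly (newton_basis u l) (u i))"
    unfolding power_eq_sum_newton_basis[of _ _ u]
    by (rule sum.mono_neutral_left) (auto simp: newton_coeff_eq_0)
  also have "\<dots> = (\<Sum>l<k. newton_coeff u l j * poly (newton_basis u l) (u i))"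
    using assms by (intro sum.mono_neutral_right) (auto simp: vanish)
  finally show ?thesis
    by (simp add: power_remainder_def poly_sum)
qed

lemma coeff_power_remainder_eq_0:
  assumes "k \<le> a"
  shows "coeff (power_remainder u k j) a = 0"
proof -
  have "coeff (newton_basis u l) a = 0" if "l < k" for l
    using degree_newton_basis_le[of u l] that assms by (intro coeff_eq_0) linarith
  then show ?thesis
    unfolding power_remainder_def coeff_sum by (intro sum.neutral) auto
qed

lemma norm_coeff_power_remainder_le:
  fixes u :: "nat \<Rightarrow> 'a::real_normed_field"
  assumes "\<And>i. norm (u i) \<le> 1"
  shows "norm (coeff (power_remainder u k j) a) \<le> real (k * 2 ^ k * (j + 1) ^ k)"
proof -
  have "norm (newton_coeff u l j * coeff (newton_basis u l) a) \<le> real ((j + 1) ^ k) * real (2 ^ k)"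
    if "l < k" for l
  proof -
    have "j choose l \<le> (j + 1) ^ k"
    proof (cases "l \<le> j")
      case True
      have "j choose l \<le> j ^ l" by (rule binomial_le_pow[OF True])
      also have "\<dots> \<le> (j + 1) ^ k"
        using that by (intro order.trans[OF power_mono power_increasing]) auto
      finally show ?thesis .
    qed (simp add: binomial_eq_0)
    then have "norm (newton_coeff u l j) \<le> real ((j + 1) ^ k)"
      using norm_newton_coeff_le[of u l j] assms by (meson of_nat_le_iff order.trans)
    moreover have "l choose a \<le> 2 ^ k"
      using that by (intro order.trans[OF binomial_le_pow2 power_increasing]) auto
    then have "norm (coeff (newton_basis u l) a) \<le> real (2 ^ k)"
      using norm_coeff_newton_basis_le[of l u a] assms by (meson of_nat_le_iff order.trans)
    ultimately show ?thesis
      unfolding norm_mult by (intro mult_mono) auto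
  qed
  then have "norm (coeff (power_remainder u k j) a) \<le> (\<Sum>l<k. real ((j + 1) ^ k) * real (2 ^ k))"
    unfolding power_remainder_def coeff_sum coeff_smult
    by (intro order.trans[OF norm_sum sum_mono]) auto
  then show ?thesis by (simp add: mult_ac)
qed

lemma norm_diff_le_1_if_same_half_grid_cell:
  fixes x y :: complex
  assumes "\<lfloor>2 * Re x\<rfloor> = \<lfloor>2 * Re y\<rfloor>" and "\<lfloor>2 * Im x\<rfloor> = \<lfloor>2 * Im y\<rfloor>"
  shows "norm (x - y) \<le> 1"
proof -
  have "\<bar>2 * Re x - 2 * Re y\<bar> < 1"
    using assms(1) floor_correct[of "2 * Re x"] floor_correct[of "2 * Re y"] by linarith
  moreover have "\<bar>2 * Im x - 2 * Im y\<bar> < 1"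
    using assms(2) floor_correct[of "2 * Im x"] floor_correct[of "2 * Im y"] by linarith
  ultimately show ?thesis
    using cmod_le[of "x - y"] by simp
qed

lemma exists_subsets_with_close_sums:
  fixes c :: "nat \<Rightarrow> nat \<Rightarrow> complex" and B :: nat
  assumes J: "finite J" and bound: "\<And>j a. j \<in> J \<Longrightarrow> a < k \<Longrightarrow> norm (c j a) \<le> B"
    and many: "(4 * card J * B + 3) ^ (2 * k) < 2 ^ card J"
  shows "\<exists>S S'. S \<subseteq> J \<and> S' \<subseteq> J \<and> S \<noteq> S' \<and>
           (\<forall>a<k. norm ((\<Sum>j\<in>S. c j a) - (\<Sum>j\<in>S'. c j a)) \<le> 1)"
proof -
  define M where "M = int (2 * card J * B + 1)"
  define T where "T = {-M..M} \<times> {-M..M}"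
  define cell where "cell x = (\<lfloor>2 * Re x\<rfloor>, \<lfloor>2 * Im x\<rfloor>)" for x :: complex
  define F where "F S = (\<lambda>a\<in>{..<k}. cell (\<Sum>j\<in>S. c j a))" for S
  have cell_in_T: "cell x \<in> T" if "norm x \<le> real (card J * B)" for x
  proof -
    have "\<bar>2 * Re x\<bar> \<le> 2 * real (card J * B)" "\<bar>2 * Im x\<bar> \<le> 2 * real (card J * B)"
      using that abs_Re_le_cmod[of x] abs_Im_le_cmod[of x] by linarith+
    then show ?thesis
      unfolding cell_def T_def M_def by (auto simp: le_floor_iff floor_le_iff)
  qed
  have "norm (\<Sum>j\<in>S. c j a) \<le> real (card J * B)" if "S \<subseteq> J" "a < k" for S a
  proof -
    have "norm (\<Sum>j\<in>S. c j a) \<le> real (card S) * B"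
      using bound that by (intro order.trans[OF norm_sum sum_bounded_above]) auto
    also have "\<dots> \<le> real (card J * B)"
      using card_mono[OF J that(1)] by (simp add: mult_right_mono)
    finally show ?thesis .
  qed
  then have "F ` Pow J \<subseteq> (\<Pi>\<^sub>E a\<in>{..<k}. T)"
    unfolding F_def using cell_in_T by (auto intro!: restrict_PiE_iff[THEN iffD2])
  moreover have "card (\<Pi>\<^sub>E a\<in>{..<k}. T) < card (Pow J)"
  proof -
    have "card {-M..M} = 4 * card J * B + 3"
      unfolding M_def by (simp add: nat_eq_iff)
    then show ?thesis
      using many J by (simp add: card_PiE T_def card_cartesian_product card_Pow power_mult power2_eq_square)
  qed
  ultimately have "\<not> inj_on F (Pow J)"
    using card_inj_on_le[of F "Pow J" "\<Pi>\<^sub>E a\<in>{..<k}. T"] by (auto simp: T_def intro: finite_PiE)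
  then obtain S S' where "S \<subseteq> J" "S' \<subseteq> J" "S \<noteq> S'" and same_cells: "F S = F S'"
    unfolding inj_on_def by blast
  moreover have "norm ((\<Sum>j\<in>S. c j a) - (\<Sum>j\<in>S'. c j a)) \<le> 1" if "a < k" for a
    using fun_cong[OF same_cells, of a] that
    by (intro norm_diff_le_1_if_same_half_grid_cell) (auto simp: F_def cell_def)
  ultimately show ?thesis by blast
qed

lemma exists_vanishing_poly_if_close_remainders:
  fixes u :: "nat \<Rightarrow> complex"
  assumes fin: "finite S" "finite S'" and "S \<noteq> S'" and high: "S \<union> S' \<subseteq> {k..}"
    and close: "\<And>a. a < k \<Longrightarrow>
      norm ((\<Sum>j\<in>S. coeff (power_remainder u k j) a) - (\<Sum>j\<in>S'. coeff (power_remainder u k j) a)) \<le> 1"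
  shows "\<exists>q. (\<forall>i<k. poly q (u i) = 0) \<and> degree q \<in> S \<union> S' \<and>
           norm (lead_coeff q) = 1 \<and> (\<forall>j. norm (coeff q j) \<le> 1)"
proof -
  define r where "r j = power_remainder u k j" for j
  \<comment> \<open>coefficients of q below k are small, those from k on lie in {-1, 0, 1}\<close>
  define q where "q = (\<Sum>j\<in>S. monom 1 j - r j) - (\<Sum>j\<in>S'. monom 1 j - r j)"
  have vanishing: "poly q (u i) = 0" if "i < k" for i
    using that by (simp add: q_def poly_sum poly_monom r_def poly_power_remainder)
  have coeff_q: "coeff q a = (of_bool (a \<in> S) - of_bool (a \<in> S')) -
      ((\<Sum>j\<in>S. coeff (r j) a) - (\<Sum>j\<in>S'. coeff (r j) a))" for a
    using fin by (simp add: q_def coeff_sum sum_subtractf)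
  have coeff_q_high: "coeff q a = of_bool (a \<in> S) - of_bool (a \<in> S')" if "k \<le> a" for a
    using that by (simp add: coeff_q r_def coeff_power_remainder_eq_0)
  have small: "norm (coeff q a) \<le> 1" for a
  proof (cases "k \<le> a")
    case False
    then have "a \<notin> S" "a \<notin> S'" using high by auto
    then show ?thesis using close[of a] False by (simp add: coeff_q r_def norm_minus_commute)
  qed (auto simp: coeff_q_high)
  define t where "t = Max (sym_diff S S')"
  have "t \<in> sym_diff S S'"
    unfolding t_def using fin \<open>S \<noteq> S'\<close> by (intro Max_in) auto
  then have "t \<in> S \<union> S'" "k \<le> t" and lead: "norm (coeff q t) = 1"
    using high by (auto simp: coeff_q_high)
  have "coeff q a = 0" if "t < a" for a
  proof -
    have "a \<notin> sym_diff S S'"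
      using that fin Max_ge[of "sym_diff S S'" a] unfolding t_def by (meson finite_Diff finite_UnI not_le)
    then show ?thesis using \<open>k \<le> t\<close> that by (auto simp: coeff_q_high)
  qed
  then have "degree q = t"
    using lead by (intro antisym degree_le le_degree) auto
  then show ?thesis
    using vanishing small lead \<open>t \<in> S \<union> S'\<close> by auto
qed

lemma exists_vanishing_poly_with_small_coeffs:
  fixes u :: "nat \<Rightarrow> complex" and k N :: nat
  assumes u: "\<And>i. norm (u i) \<le> 1"
    and many: "(4 * N * (k * 2 ^ k * (k + N) ^ k) + 3) ^ (2 * k) < 2 ^ N"
  shows "\<exists>q. (\<forall>i<k. poly q (u i) = 0) \<and> degree q < k + N \<and>
           norm (lead_coeff q) = 1 \<and> (\<forall>j. norm (coeff q j) \<le> 1)"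
proof -
  define J where "J = {k..<k + N}"
  have "norm (coeff (power_remainder u k j) a) \<le> real (k * 2 ^ k * (k + N) ^ k)" if "j \<in> J" for j a
  proof -
    have "k * 2 ^ k * (j + 1) ^ k \<le> k * 2 ^ k * (k + N) ^ k"
      using that by (intro mult_le_mono2 power_mono) (auto simp: J_def)
    moreover have "norm (coeff (power_remainder u k j) a) \<le> real (k * 2 ^ k * (j + 1) ^ k)"
      using u by (rule norm_coeff_power_remainder_le)
    ultimately show ?thesis
      by (meson of_nat_le_iff order.trans)
  qed
  then obtain S S' where S: "S \<subseteq> J" and S': "S' \<subseteq> J" and "S \<noteq> S'"
    and close: "\<forall>a<k. norm ((\<Sum>j\<in>S. coeff (power_remainder u k j) a) -
                              (\<Sum>j\<in>S'. coeff (power_remainder u k j) a)) \<le> 1"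
    using exists_subsets_with_close_sums[where J = J and k = k and c = "\<lambda>j. coeff (power_remainder u k j)"
        and B = "k * 2 ^ k * (k + N) ^ k"] many
    by (auto simp: J_def)
  have "finite S" "finite S'" "S \<union> S' \<subseteq> {k..}"
    using S S' finite_subset unfolding J_def by auto
  then obtain q where "\<forall>i<k. poly q (u i) = 0" "degree q \<in> S \<union> S'"
    "norm (lead_coeff q) = 1" "\<forall>j. norm (coeff q j) \<le> 1"
    using exists_vanishing_poly_if_close_remainders[of S S' k u] \<open>S \<noteq> S'\<close> close by auto
  then show ?thesis
    using S S' by (intro exI[of _ q]) (auto simp: J_def)
qed

lemma sum_coeff_mult_power_sum_eq_0:
  fixes p :: "'a::comm_ring_1 poly"
  assumes "\<And>i. i < k \<Longrightarrow> poly p (z i) = 0"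
  shows "(\<Sum>j\<le>degree p. coeff p j * (\<Sum>i<k. w i * z i ^ j)) = 0"
proof -
  have "(\<Sum>j\<le>degree p. coeff p j * (\<Sum>i<k. w i * z i ^ j)) = (\<Sum>i<k. w i * poly p (z i))"
    by (simp add: poly_altdef sum_distrib_left sum_distrib_right mult_ac sum.swap[of _ "{..<k}"])
  also have "\<dots> = 0"
    using assms by simp
  finally show ?thesis .
qed

lemma power_sum_eq_combination_of_shifts:
  fixes p :: "'a::field poly"
  assumes "\<And>i. i < k \<Longrightarrow> poly p (z i) = 0" and "coeff p 0 \<noteq> 0" and "degree p \<le> m"
  shows "(\<Sum>i<k. w i) = (\<Sum>j\<in>{1..m}. - coeff p j / coeff p 0 * (\<Sum>i<k. w i * z i ^ j))"
proof -
  define Y where "Y j = (\<Sum>i<k. w i * z i ^ j)" for j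
  have "coeff p 0 * Y 0 + (\<Sum>j\<in>{1..m}. coeff p j * Y j) = (\<Sum>j\<le>m. coeff p j * Y j)"
    by (simp add: atMost_atLeast0 sum.atLeast_Suc_atMost)
  also have "\<dots> = (\<Sum>j\<le>degree p. coeff p j * Y j)"
    using assms(3) by (intro sum.mono_neutral_right) (auto simp: coeff_eq_0)
  also have "\<dots> = 0"
    unfolding Y_def using assms(1) by (rule sum_coeff_mult_power_sum_eq_0)
  finally show ?thesis
    using assms(2) by (simp add: Y_def sum_divide_distrib[symmetric] field_simps sum_negf eq_neg_iff_add_eq_0)
qed

lemma sparse_signal_shift:
  "sparse_signal d k v f (\<lambda>l. t0 l + real j * \<tau> l) =
   (\<Sum>i<k. v i * exp (2 * pi * \<i> * inner_d d (f i) t0) * exp (2 * pi * \<i> * inner_d d (f i) \<tau>) ^ j)"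
proof -
  have "inner_d d a (\<lambda>l. t0 l + real j * \<tau> l) = inner_d d a t0 + real j * inner_d d a \<tau>" for a
    unfolding inner_d_def by (simp add: sum.distrib sum_distrib_left algebra_simps)
  then show ?thesis
    by (simp add: sparse_signal_def exp_add distrib_left mult.assoc exp_of_nat_mult[symmetric] mult_ac)
qed

lemma sparse_signal_extrapolation:
  assumes many: "(4 * N * (k * 2 ^ k * (k + N) ^ k) + 3) ^ (2 * k) < 2 ^ N"
  shows "\<exists>C. (\<forall>j\<in>{1..k + N}. norm (C j) \<le> 1) \<and>
           sparse_signal d k v f t0 =
             (\<Sum>j\<in>{1..k + N}. C j * sparse_signal d k v f (\<lambda>l. t0 l + real j * \<tau> l))"
proof -
  define w where "w i = v i * exp (2 * pi * \<i> * inner_d d (f i) t0)" for i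
  define z where "z i = exp (2 * pi * \<i> * inner_d d (f i) \<tau>)" for i
  have signal: "sparse_signal d k v f (\<lambda>l. t0 l + real j * \<tau> l) = (\<Sum>i<k. w i * z i ^ j)" for j
    unfolding w_def z_def by (rule sparse_signal_shift)
  have signal_0: "sparse_signal d k v f t0 = (\<Sum>i<k. w i)"
    using signal[of 0] by simp
  have norm_z: "norm (z i) = 1" for i
    by (simp add: z_def norm_exp_eq_Re)
  obtain q where vanishing: "\<forall>i<k. poly q (inverse (z i)) = 0" and "degree q < k + N"
    and lead: "norm (lead_coeff q) = 1" and small: "\<forall>j. norm (coeff q j) \<le> 1"
    using exists_vanishing_poly_with_small_coeffs[of "\<lambda>i. inverse (z i)" N k] many norm_z
    by (auto simp: norm_inverse)
  define p where "p = reflect_poly q"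
  have "poly p (z i) = 0" if "i < k" for i
  proof -
    have "z i \<noteq> 0" using norm_z[of i] by auto
    then show ?thesis using vanishing that by (simp add: p_def poly_reflect_poly_nz)
  qed
  moreover have p0: "norm (coeff p 0) = 1"
    using lead by (simp add: p_def)
  moreover have "degree p \<le> k + N"
    using degree_reflect_poly_le[of q] \<open>degree q < k + N\<close> by (simp add: p_def)
  ultimately have "(\<Sum>i<k. w i) = (\<Sum>j\<in>{1..k + N}. - coeff p j / coeff p 0 * (\<Sum>i<k. w i * z i ^ j))"
    by (intro power_sum_eq_combination_of_shifts) auto
  moreover have "norm (- coeff p j / coeff p 0) \<le> 1" for j
    using small p0 by (simp add: p_def coeff_reflect_poly norm_divide)
  ultimately show ?thesis
    by (intro exI[of _ "\<lambda>j. - coeff p j / coeff p 0"]) (simp add: signal signal_0)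
qed

lemma le_two_power_ceiling_log: "k + 1 \<le> 2 ^ nat \<lceil>log 2 (real k + 1)\<rceil>"
proof -
  have "real (k + 1) = 2 powr log 2 (real k + 1)" by simp
  also have "\<dots> \<le> 2 powr real (nat \<lceil>log 2 (real k + 1)\<rceil>)"
    by (intro powr_mono) linarith+
  also have "\<dots> = real (2 ^ nat \<lceil>log 2 (real k + 1)\<rceil>)"
    unfolding of_nat_power of_nat_numeral by (rule powr_realpow) simp
  finally show ?thesis by linarith
qed

lemma ceiling_log_le_twice_log:
  assumes "1 \<le> k"
  shows "real (nat \<lceil>log 2 (real k + 1)\<rceil>) \<le> 2 * log 2 (real k + 1)"
proof -
  have "1 \<le> log 2 (real k + 1)" using assms by simp
  then show ?thesis by linarith
qed

lemma grid_exponent_less: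
  fixes k L :: nat
  assumes "1 \<le> k" and "1 \<le> L"
  shows "2 * k * (k + 3 + (8 + 3 * L) * (k + 2)) < 128 * k^2 * L"
proof -
  have "k \<le> k * L" "L \<le> k * L" "1 \<le> k * L"
    using assms by simp_all
  moreover have "(8 + 3 * L) * (k + 2) = 8 * k + 16 + 3 * (k * L) + 6 * L"
    by (simp add: algebra_simps)
  ultimately have "k + 3 + (8 + 3 * L) * (k + 2) \<le> 37 * (k * L)" by linarith
  then have "2 * k * (k + 3 + (8 + 3 * L) * (k + 2)) \<le> 74 * k^2 * L"
    by (auto simp: power2_eq_square intro: order.trans[OF mult_le_mono2])
  also have "\<dots> < 128 * k^2 * L" using assms by simp
  finally show ?thesis .
qed

lemma add_128_mult_le_two_power:
  fixes k L :: nat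
  assumes "k + 1 \<le> 2 ^ L"
  shows "k + 128 * k\<^sup>2 * L \<le> 2 ^ (8 + 3 * L)"
proof -
  have "k\<^sup>2 * L \<le> (2 ^ L)\<^sup>2 * 2 ^ L"
    using assms less_exp[of L] by (intro mult_le_mono power_mono) auto
  also have "\<dots> = 2 ^ (3 * L)"
    by (simp flip: power_add power_mult)
  moreover have "2 ^ L \<le> (2::nat) ^ (3 * L)"
    by (intro power_increasing) auto
  ultimately have "k + 128 * k\<^sup>2 * L \<le> 2 ^ L + 128 * 2 ^ (3 * L)"
    using assms by linarith
  also have "\<dots> \<le> 256 * 2 ^ (3 * L)"
    using \<open>2 ^ L \<le> 2 ^ (3 * L)\<close> by linarith
  finally show ?thesis
    by (simp add: power_add)
qed

lemma grid_count_less_subset_count: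
  fixes k L :: nat
  assumes k: "1 \<le> k" and kL: "k + 1 \<le> 2 ^ L"
  defines "N \<equiv> 128 * k\<^sup>2 * L"
  shows "(4 * N * (k * 2 ^ k * (k + N) ^ k) + 3) ^ (2 * k) < 2 ^ N"
proof -
  define n where "n = k + N"
  define E where "E = 8 + 3 * L"
  have L: "1 \<le> L"
    using k kL by (cases L) auto
  have n_le: "n \<le> 2 ^ E"
    unfolding n_def N_def E_def using kL by (rule add_128_mult_le_two_power)
  have "4 * N * (k * 2 ^ k * n ^ k) \<le> 4 * n * (n * 2 ^ k * n ^ k)"
    unfolding n_def by (intro mult_le_mono) auto
  also have "\<dots> = 2 ^ (k + 2) * n ^ (k + 2)"
    by (simp add: power_add algebra_simps)
  finally have "4 * N * (k * 2 ^ k * n ^ k) \<le> 2 ^ (k + 2) * n ^ (k + 2)" .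
  moreover have "4 * 1 \<le> 2 ^ (k + 2) * n ^ (k + 2)"
    using power_increasing[of 2 "k + 2" "2::nat"] k
    by (intro mult_le_mono) (auto simp: n_def)
  ultimately have "4 * N * (k * 2 ^ k * n ^ k) + 3 \<le> 2 * (2 ^ (k + 2) * n ^ (k + 2))"
    by linarith
  also have "\<dots> \<le> 2 * (2 ^ (k + 2) * (2 ^ E) ^ (k + 2))"
    using n_le by (intro mult_le_mono2 power_mono) auto
  also have "\<dots> = 2 ^ (k + 3 + E * (k + 2))"
    unfolding power_add power_mult by (simp add: ac_simps)
  finally have "(4 * N * (k * 2 ^ k * n ^ k) + 3) ^ (2 * k) \<le> (2 ^ (k + 3 + E * (k + 2))) ^ (2 * k)"
    by (rule power_mono) simp
  also have "\<dots> = 2 ^ (2 * k * (k + 3 + E * (k + 2)))"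
    by (simp add: power_mult[symmetric] mult.commute)
  also have "\<dots> < 2 ^ N"
    using grid_exponent_less[OF k L] unfolding E_def N_def by (intro power_strict_increasing) auto
  finally show ?thesis unfolding n_def .
qed

lemma num_shifts_le:
  "real (k + 128 * k\<^sup>2 * nat \<lceil>log 2 (real k + 1)\<rceil>) \<le> 257 / ln 2 * (real k)\<^sup>2 * ln (real k + 1)"
proof (cases "k = 0")
  case False
  then have k: "1 \<le> k" by simp
  have log_ge: "1 \<le> log 2 (real k + 1)" using k by simp
  have "real k \<le> (real k)\<^sup>2 * log 2 (real k + 1)"
    using k log_ge order.trans[of "real k" "(real k)\<^sup>2" "(real k)\<^sup>2 * log 2 (real k + 1)"]
    by (simp add: power2_eq_square mult_le_cancel_left1)
  moreover have "128 * (real k)\<^sup>2 * real (nat \<lceil>log 2 (real k + 1)\<rceil>)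
      \<le> 128 * (real k)\<^sup>2 * (2 * log 2 (real k + 1))"
    using ceiling_log_le_twice_log[OF k] by (intro mult_left_mono) auto
  ultimately have "real (k + 128 * k\<^sup>2 * nat \<lceil>log 2 (real k + 1)\<rceil>)
      \<le> 257 * (real k)\<^sup>2 * log 2 (real k + 1)"
    by simp
  then show ?thesis by (simp add: log_def)
qed simp

theorem lemma5p4:
  shows "\<exists>c::real. c > 0 \<and>
    (\<forall>k d::nat. \<exists>m::nat. real m \<le> c * (real k)^2 * ln (real k + 1) \<and>
      (\<forall>(v::nat \<Rightarrow> complex) (f::nat \<Rightarrow> nat \<Rightarrow> real) (t0::nat \<Rightarrow> real) (\<tau>::nat \<Rightarrow> real).
         (\<forall>l<d. t0 l \<ge> 0) \<longrightarrow> (\<forall>l<d. \<tau> l > 0) \<longrightarrow>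
         (\<exists>C::nat \<Rightarrow> complex. (\<forall>j\<in>{1..m}. norm (C j) \<le> 11) \<and>
            sparse_signal d k v f t0 =
              (\<Sum>j\<in>{1..m}. C j * sparse_signal d k v f (\<lambda>l. t0 l + real j * \<tau> l)))))"
proof -
  have extrapolation: "\<exists>m. real m \<le> 257 / ln 2 * (real k)\<^sup>2 * ln (real k + 1) \<and>
    (\<forall>v f t0 \<tau>. \<exists>C. (\<forall>j\<in>{1..m}. norm (C j) \<le> 1) \<and>
       sparse_signal d k v f t0 = (\<Sum>j\<in>{1..m}. C j * sparse_signal d k v f (\<lambda>l. t0 l + real j * \<tau> l)))"
    for k d
  proof (cases "k = 0")
    case False
    define N where "N = 128 * k\<^sup>2 * nat \<lceil>log 2 (real k + 1)\<rceil>"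
    have "(4 * N * (k * 2 ^ k * (k + N) ^ k) + 3) ^ (2 * k) < 2 ^ N"
      unfolding N_def using False le_two_power_ceiling_log by (intro grid_count_less_subset_count) auto
    then show ?thesis
      using num_shifts_le[of k] sparse_signal_extrapolation unfolding N_def by blast
  qed (simp add: sparse_signal_def)
  show ?thesis
    apply (intro exI[of _ "257 / ln 2"] conjI allI)
    subgoal by simp
    subgoal for k d using extrapolation[of k d] by (meson dual_order.trans one_le_numeral)
    done
qed

end
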